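(* Let $L$ be an ideal lattice. A support datum $(X,\sigma)$ on $L$ is classifying if and only if the canonical morphism $f\colon(X,\sigma)\to(\operatorname{Spec}^*L,\operatorname{supp})$ (the unique continuous map with $\sigma(a)=f^{-1}(\operatorname{supp}(a))$ for compact $a$) is a homeomorphism.
   Context: An ideal lattice is a poset $(L,\leq)$ with an associative multiplication such that: (L1) $L$ is a complete lattice; (L2) every element is a supremum of compact elements ($a$ is compact if $a\leq\sup A$ implies $a\leq\sup A'$ for some finite $A'\subseteq A$); (L3) multiplication distributes over binary joins on both sides; (L4) $1=\sup L$ is compact and is a two-sided identity; (L5) products of compact elements are compact. Prime: $p\neq1$ with $ab\leq p\Rightarrow a\leq p$ or $b\leq p$; semi-prime: $bb\leq a\Rightarrow b\leq a$. $\operatorname{Spec}^*L$ is the set of primes with the topology whose open sets are unions of sets whose complements are quasi-compact open in the Zariski topology (Zariski closed sets being $V(a)=\{p\mid a\leq p\}$); $\operatorname{supp}(a)=\{p\mid a\not\leq p\}$. A support datum on $L$ is a pair $(X,\sigma)$, $X$ a space, $\sigma$ assigning to each compact $a$ a closed subset with $\sigma(a\vee b)=\sigma(a)\cup\sigma(b)$, $\sigma(1)=X$, $\sigma(ab)=\sigma(a)\cap\sigma(b)$. It is classifying if $X$ is spectral ($T_0$, quasi-compact, quasi-compact opens closed under finite intersections and forming a basis, generic points for non-empty irreducible closed sets) and $a\mapsto\bigcup_{b\leq a\text{ compact}}\sigma(b)$, $Y\mapsto\bigvee_{b\text{ compact},\sigma(b)\subseteq Y}b$ give mutually inverse bijections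 between semi-primes of $L$ and subsets $Y=\bigcup_iY_i\subseteq X$ with each $X\setminus Y_i$ quasi-compact open. *)

theory Defs
  imports "HOL-Analysis.Analysis"
begin

text \<open>The underlying complete lattice (L1) is the type 'a with its order;
  the multiplication is the parameter m.\<close>

definition lat_compact :: "'a::complete_lattice \<Rightarrow> bool" where
  "lat_compact a \<longleftrightarrow>
     (\<forall>A. a \<le> Sup A \<longrightarrow> (\<exists>A'. A' \<subseteq> A \<and> finite A' \<and> a \<le> Sup A'))"

definition ideal_lattice :: "('a::complete_lattice \<Rightarrow> 'a \<Rightarrow> 'a) \<Rightarrow> bool" where
  "ideal_lattice (m :: 'a \<Rightarrow> 'a \<Rightarrow> 'a) \<longleftrightarrow>
     (\<forall>a b c. m (m a b) c = m a (m b c)) \<and>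
     (\<forall>a::'a. \<exists>A. (\<forall>b\<in>A. lat_compact b) \<and> a = Sup A) \<and>
     (\<forall>a b c. m a (sup b c) = sup (m a b) (m a c) \<and> m (sup b c) a = sup (m b a) (m c a)) \<and>
     lat_compact (top :: 'a) \<and> (\<forall>a. m top a = a \<and> m a top = a) \<and>
     (\<forall>a b. lat_compact a \<longrightarrow> lat_compact b \<longrightarrow> lat_compact (m a b))"

definition lat_prime :: "('a::complete_lattice \<Rightarrow> 'a \<Rightarrow> 'a) \<Rightarrow> 'a \<Rightarrow> bool" where
  "lat_prime m p \<longleftrightarrow> p \<noteq> top \<and> (\<forall>a b. m a b \<le> p \<longrightarrow> a \<le> p \<or> b \<le> p)"

definition lat_semiprime :: "('a::complete_lattice \<Rightarrow> 'a \<Rightarrow> 'a) \<Rightarrow> 'a \<Rightarrow> bool" where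
  "lat_semiprime m a \<longleftrightarrow> (\<forall>b. m b b \<le> a \<longrightarrow> b \<le> a)"

definition primes :: "('a::complete_lattice \<Rightarrow> 'a \<Rightarrow> 'a) \<Rightarrow> 'a set" where
  "primes m = {p. lat_prime m p}"

definition zarV :: "('a::complete_lattice \<Rightarrow> 'a \<Rightarrow> 'a) \<Rightarrow> 'a \<Rightarrow> 'a set" where
  "zarV m a = {p \<in> primes m. a \<le> p}"

definition zariski :: "('a::complete_lattice \<Rightarrow> 'a \<Rightarrow> 'a) \<Rightarrow> 'a topology" where
  "zariski m = topology (\<lambda>U. \<exists>a. U = primes m - zarV m a)"

definition spec_star :: "('a::complete_lattice \<Rightarrow> 'a \<Rightarrow> 'a) \<Rightarrow> 'a topology" where
  "spec_star m = topology (\<lambda>S. \<exists>F. F \<subseteq> {primes m - U | U. openin (zariski m) U \<and> compactin (zariski m) U}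
                                  \<and> S = \<Union>F)"

definition supp :: "('a::complete_lattice \<Rightarrow> 'a \<Rightarrow> 'a) \<Rightarrow> 'a \<Rightarrow> 'a set" where
  "supp m a = {p \<in> primes m. \<not> a \<le> p}"

definition support_datum ::
  "('a::complete_lattice \<Rightarrow> 'a \<Rightarrow> 'a) \<Rightarrow> 'b topology \<Rightarrow> ('a \<Rightarrow> 'b set) \<Rightarrow> bool" where
  "support_datum m X \<sigma> \<longleftrightarrow>
     (\<forall>a. lat_compact a \<longrightarrow> closedin X (\<sigma> a)) \<and>
     (\<forall>a b. lat_compact a \<longrightarrow> lat_compact b \<longrightarrow> \<sigma> (sup a b) = \<sigma> a \<union> \<sigma> b) \<and>
     \<sigma> top = topspace X \<and>
     (\<forall>a b. lat_compact a \<longrightarrow> lat_compact b \<longrightarrow> \<sigma> (m a b) = \<sigma> a \<inter> \<sigma> b)"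

definition qc_open :: "'b topology \<Rightarrow> 'b set \<Rightarrow> bool" where
  "qc_open X U \<longleftrightarrow> openin X U \<and> compactin X U"

definition irreducible_in :: "'b topology \<Rightarrow> 'b set \<Rightarrow> bool" where
  "irreducible_in X C \<longleftrightarrow> C \<noteq> {} \<and> C \<subseteq> topspace X \<and>
     (\<forall>A B. closedin X A \<longrightarrow> closedin X B \<longrightarrow> C \<subseteq> A \<union> B \<longrightarrow> C \<subseteq> A \<or> C \<subseteq> B)"

definition spectral_space :: "'b topology \<Rightarrow> bool" where
  "spectral_space X \<longleftrightarrow>
     t0_space X \<and> compact_space X \<and>
     (\<forall>U V. qc_open X U \<longrightarrow> qc_open X V \<longrightarrow> qc_open X (U \<inter> V)) \<and>
     (\<forall>U x. openin X U \<longrightarrow> x \<in> U \<longrightarrow> (\<exists>W. qc_open X W \<and> x \<in> W \<and> W \<subseteq> U)) \<and>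
     (\<forall>C. closedin X C \<longrightarrow> irreducible_in X C \<longrightarrow> (\<exists>x\<in>C. X closure_of {x} = C))"

definition thomason_subset :: "'b topology \<Rightarrow> 'b set \<Rightarrow> bool" where
  "thomason_subset X Y \<longleftrightarrow>
     (\<exists>F. (\<forall>Z\<in>F. Z \<subseteq> topspace X \<and> qc_open X (topspace X - Z)) \<and> Y = \<Union>F)"

definition sd_phi :: "('a::complete_lattice \<Rightarrow> 'b set) \<Rightarrow> 'a \<Rightarrow> 'b set" where
  "sd_phi \<sigma> a = (\<Union>{\<sigma> b | b. lat_compact b \<and> b \<le> a})"

definition sd_psi :: "('a::complete_lattice \<Rightarrow> 'b set) \<Rightarrow> 'b set \<Rightarrow> 'a" where
  "sd_psi \<sigma> Y = Sup {b. lat_compact b \<and> \<sigma> b \<subseteq> Y}"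

definition classifying ::
  "('a::complete_lattice \<Rightarrow> 'a \<Rightarrow> 'a) \<Rightarrow> 'b topology \<Rightarrow> ('a \<Rightarrow> 'b set) \<Rightarrow> bool" where
  "classifying m X \<sigma> \<longleftrightarrow>
     spectral_space X \<and>
     (\<forall>a. lat_semiprime m a \<longrightarrow> thomason_subset X (sd_phi \<sigma> a) \<and> sd_psi \<sigma> (sd_phi \<sigma> a) = a) \<and>
     (\<forall>Y. thomason_subset X Y \<longrightarrow> lat_semiprime m (sd_psi \<sigma> Y) \<and> sd_phi \<sigma> (sd_psi \<sigma> Y) = Y)"

end

(* Both conditions are equivalent to a third one: X is spectral, f maps X onto the primes, and
   the quasi-compact opens of X are exactly the sets X - \<sigma>(c) with c compact.  This condition
   makes the datum classifying, because semiprimes are intersections of primes, and a homeomorphism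
   transports it from Spec*, whose quasi-compact opens are the V(c).  Conversely, if the datum is
   classifying then \<sigma>(c) is a closed Thomason subset, so its complement is quasi-compact open by
   compactness of the patch topology; patch compactness also yields a point over every prime, the
   T0 axiom gives injectivity, and the description of the quasi-compact opens makes f open. *)

theory Submission
  imports Defs
begin

lemma finite_subset_directed_bound:
  assumes "finite G" "G \<subseteq> A" "A \<noteq> {}"
    and directed: "\<And>x y. x \<in> A \<Longrightarrow> y \<in> A \<Longrightarrow> \<exists>z\<in>A. R x z \<and> R y z"
    and trans: "\<And>x y z. R x y \<Longrightarrow> R y z \<Longrightarrow> R x z"
  shows "\<exists>z\<in>A. \<forall>x\<in>G. R x z"
  using assms(1,2)
proof (induction G rule: finite_induct)
  case empty
  then show ?case using \<open>A \<noteq> {}\<close> by blast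
next
  case (insert x G)
  then obtain z where z: "z \<in> A" "\<forall>y\<in>G. R y z" by blast
  obtain w where "w \<in> A" "R x w" "R z w"
    using directed[OF _ z(1), of x] insert.prems by blast
  then show ?case using z trans by blast
qed

lemma lat_compact_bot: "lat_compact bot"
  unfolding lat_compact_def by (auto intro: exI[of _ "{}"])

lemma lat_compact_sup:
  assumes "lat_compact a" "lat_compact b"
  shows "lat_compact (sup a b)"
  unfolding lat_compact_def
proof (intro allI impI)
  fix A assume "sup a b \<le> Sup A"
  then obtain A1 A2 where "A1 \<subseteq> A" "finite A1" "a \<le> Sup A1" "A2 \<subseteq> A" "finite A2" "b \<le> Sup A2"
    using assms unfolding lat_compact_def by (meson le_sup_iff)
  then show "\<exists>A'. A' \<subseteq> A \<and> finite A' \<and> sup a b \<le> Sup A'"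
    by (intro exI[of _ "A1 \<union> A2"]) (auto simp: Sup_union_distrib le_supI1 le_supI2)
qed

lemma lat_compact_Sup_finite: "finite A \<Longrightarrow> \<forall>b\<in>A. lat_compact b \<Longrightarrow> lat_compact (Sup A)"
  by (induction A rule: finite_induct) (auto simp: lat_compact_bot lat_compact_sup)

lemma lat_compact_le_Sup_directed:
  assumes "lat_compact b" "b \<le> Sup D" "D \<noteq> {}"
    and directed: "\<And>x y. x \<in> D \<Longrightarrow> y \<in> D \<Longrightarrow> \<exists>z\<in>D. x \<le> z \<and> y \<le> z"
  shows "\<exists>z\<in>D. b \<le> z"
proof -
  obtain F where F: "F \<subseteq> D" "finite F" "b \<le> Sup F"
    using assms(1,2) unfolding lat_compact_def by blast
  have "\<exists>z\<in>D. \<forall>x\<in>F. x \<le> z"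
    by (rule finite_subset_directed_bound[of F D "(\<le>)"]) (use F assms(3) directed order_trans in blast)+
  then show ?thesis using F(3) by (meson Sup_least order_trans)
qed

lemma prime_imp_semiprime: "lat_prime m p \<Longrightarrow> lat_semiprime m p"
  unfolding lat_prime_def lat_semiprime_def by blast

definition lat_radical :: "('a::complete_lattice \<Rightarrow> 'a \<Rightarrow> 'a) \<Rightarrow> 'a \<Rightarrow> 'a" where
  "lat_radical m a = Inf (zarV m a)"

lemma le_lat_radical: "a \<le> lat_radical m a"
  unfolding lat_radical_def zarV_def by (simp add: le_Inf_iff)

lemma lat_radical_le_prime: "lat_prime m p \<Longrightarrow> a \<le> p \<Longrightarrow> lat_radical m a \<le> p"
  unfolding lat_radical_def zarV_def primes_def by (simp add: Inf_lower)

lemma semiprime_lat_radical: "lat_semiprime m (lat_radical m a)"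
  unfolding lat_semiprime_def lat_radical_def
proof (intro allI impI)
  fix b assume "m b b \<le> Inf (zarV m a)"
  then show "b \<le> Inf (zarV m a)"
    using prime_imp_semiprime unfolding lat_semiprime_def zarV_def primes_def
    by (auto simp: le_Inf_iff)
qed

primrec iter_square :: "('a \<Rightarrow> 'a \<Rightarrow> 'a) \<Rightarrow> 'a \<Rightarrow> nat \<Rightarrow> 'a" where
  "iter_square m b 0 = b"
| "iter_square m b (Suc n) = m (iter_square m b n) (iter_square m b n)"

lemma iter_square_not_le_semiprime:
  assumes "lat_semiprime m a" "\<not> b \<le> a"
  shows "\<not> iter_square m b n \<le> a"
proof (induction n)
  case 0
  show ?case using assms(2) by simp
next
  case (Suc n)
  then show ?case using assms(1) unfolding lat_semiprime_def by (metis iter_square.simps(2))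
qed

locale ideal_lat =
  fixes m :: "'a::complete_lattice \<Rightarrow> 'a \<Rightarrow> 'a"
  assumes ideal_lattice: "ideal_lattice m"
begin

lemma compactly_generated: "\<exists>A. (\<forall>b\<in>A. lat_compact b) \<and> a = Sup A"
  and mult_sup_distrib_left: "m a (sup b c) = sup (m a b) (m a c)"
  and mult_sup_distrib_right: "m (sup b c) a = sup (m b a) (m c a)"
  and lat_compact_top: "lat_compact (top::'a)"
  and mult_top_left [simp]: "m top a = a"
  and mult_top_right [simp]: "m a top = a"
  and lat_compact_mult: "lat_compact a \<Longrightarrow> lat_compact b \<Longrightarrow> lat_compact (m a b)"
  using ideal_lattice unfolding ideal_lattice_def by blast+

lemma mult_mono: "a \<le> a' \<Longrightarrow> b \<le> b' \<Longrightarrow> m a b \<le> m a' b'"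
  by (metis mult_sup_distrib_left mult_sup_distrib_right sup.absorb_iff2 sup.coboundedI1)

lemma mult_le_left: "m a b \<le> a"
  using mult_mono[of a a b top] by simp

lemma mult_le_right: "m a b \<le> b"
  using mult_mono[of a top b b] by simp

lemma Sup_compacts_below: "Sup {b. lat_compact b \<and> b \<le> a} = (a::'a)"
proof (rule antisym)
  show "Sup {b. lat_compact b \<and> b \<le> a} \<le> a" by (rule Sup_least) simp
  obtain A where A: "\<forall>b\<in>A. lat_compact b" "a = Sup A" using compactly_generated by blast
  then have "A \<subseteq> {b. lat_compact b \<and> b \<le> a}" by (simp add: Sup_upper subset_eq)
  then show "a \<le> Sup {b. lat_compact b \<and> b \<le> a}" using A(2) by (simp add: Sup_subset_mono)
qed

lemma le_iff_compacts_le: "(a::'a) \<le> c \<longleftrightarrow> (\<forall>b. lat_compact b \<and> b \<le> a \<longrightarrow> b \<le> c)"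
proof
  assume "\<forall>b. lat_compact b \<and> b \<le> a \<longrightarrow> b \<le> c"
  then have "Sup {b. lat_compact b \<and> b \<le> a} \<le> c" by (intro Sup_least) simp
  then show "a \<le> c" by (simp add: Sup_compacts_below)
qed (meson order_trans)

lemma obtain_compact_not_le:
  assumes "\<not> (a::'a) \<le> c"
  obtains b where "lat_compact b" "b \<le> a" "\<not> b \<le> c"
  using assms le_iff_compacts_le by blast

lemma prime_mult_le_iff: "lat_prime m p \<Longrightarrow> m a b \<le> p \<longleftrightarrow> a \<le> p \<or> b \<le> p"
  unfolding lat_prime_def using mult_le_left mult_le_right order_trans by blast

lemma prime_not_top_le: "lat_prime m p \<Longrightarrow> \<not> top \<le> p"
  unfolding lat_prime_def using top_le by blast

lemma prime_if_maximal_avoiding: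
  assumes "S \<noteq> {}"
    and msys: "\<And>s t. s \<in> S \<Longrightarrow> t \<in> S \<Longrightarrow> \<exists>u\<in>S. u \<le> m s t"
    and avoids: "\<forall>s\<in>S. \<not> s \<le> p"
    and maximal: "\<And>c. p \<le> c \<Longrightarrow> \<forall>s\<in>S. \<not> s \<le> c \<Longrightarrow> c = p"
  shows "lat_prime m p"
  unfolding lat_prime_def
proof (intro conjI allI impI)
  show "p \<noteq> top" using avoids \<open>S \<noteq> {}\<close> by auto
  have escape: "\<exists>s\<in>S. s \<le> sup p z" if "\<not> z \<le> p" for z
  proof (rule ccontr)
    assume "\<not> (\<exists>s\<in>S. s \<le> sup p z)"
    then have "sup p z = p" using maximal[of "sup p z"] by simp
    then show False using that by (metis sup.cobounded2)
  qed
  fix x y assume "m x y \<le> p"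
  show "x \<le> p \<or> y \<le> p"
  proof (rule ccontr)
    assume "\<not> (x \<le> p \<or> y \<le> p)"
    then obtain s t where st: "s \<in> S" "s \<le> sup p x" "t \<in> S" "t \<le> sup p y"
      using escape by blast
    obtain u where u: "u \<in> S" "u \<le> m s t" using msys st by blast
    have "m s t \<le> m (sup p x) (sup p y)" using st by (simp add: mult_mono)
    also have "\<dots> = sup (sup (m p p) (m x p)) (sup (m p y) (m x y))"
      by (simp add: mult_sup_distrib_left mult_sup_distrib_right)
    also have "\<dots> \<le> p" using \<open>m x y \<le> p\<close> by (auto intro: mult_le_left mult_le_right)
    finally show False using u avoids by (meson order_trans)
  qed
qed

lemma exists_prime_avoiding:
  assumes compact: "\<forall>s\<in>S. lat_compact s" and "S \<noteq> {}"
    and msys: "\<And>s t. s \<in> S \<Longrightarrow> t \<in> S \<Longrightarrow> \<exists>u\<in>S. u \<le> m s t"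
    and avoid: "\<forall>s\<in>S. \<not> s \<le> a"
  obtains p where "lat_prime m p" "a \<le> p" "\<forall>s\<in>S. \<not> s \<le> p"
proof -
  define P where "P = {c. a \<le> c \<and> (\<forall>s\<in>S. \<not> s \<le> c)}"
  have po: "partial_order_on P (relation_of (\<le>) P)"
    by (rule partial_order_on_relation_ofI) auto
  have chain_bound: "\<exists>u\<in>P. \<forall>c\<in>C. c \<le> u" if C: "C \<in> Chains (relation_of (\<le>) P)" for C
  proof -
    have "C \<subseteq> P" using Chains_relation_of[OF C] .
    have chain: "x \<le> y \<or> y \<le> x" if "x \<in> C" "y \<in> C" for x y
      using C that unfolding Chains_def relation_of_def by blast
    let ?D = "insert a C"
    have "\<forall>c\<in>C. a \<le> c" using \<open>C \<subseteq> P\<close> unfolding P_def by blast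
    then have comparable: "x \<le> y \<or> y \<le> x" if "x \<in> ?D" "y \<in> ?D" for x y
      using that chain by blast
    have directed: "\<exists>z\<in>?D. x \<le> z \<and> y \<le> z" if "x \<in> ?D" "y \<in> ?D" for x y
      using comparable[OF that] that by blast
    have "\<not> s \<le> Sup ?D" if "s \<in> S" for s
    proof
      assume "s \<le> Sup ?D"
      moreover have "lat_compact s" using compact that by blast
      ultimately have "\<exists>z\<in>?D. s \<le> z"
        by (intro lat_compact_le_Sup_directed[OF _ _ _ directed]) simp_all
      moreover have "\<forall>c\<in>?D. \<not> s \<le> c" using avoid that \<open>C \<subseteq> P\<close> unfolding P_def by blast
      ultimately show False by blast
    qed
    then have "Sup ?D \<in> P" unfolding P_def by (simp add: Sup_upper)
    then show ?thesis by (meson Sup_upper insertCI)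
  qed
  obtain p where "p \<in> P" and maximal: "\<forall>c\<in>P. p \<le> c \<longrightarrow> c = p"
    using predicate_Zorn[OF po chain_bound] by blast
  then have "a \<le> p" and avoids: "\<forall>s\<in>S. \<not> s \<le> p" unfolding P_def by blast+
  have "lat_prime m p"
  proof (rule prime_if_maximal_avoiding[OF \<open>S \<noteq> {}\<close> msys avoids])
    fix c assume c: "p \<le> c" "\<forall>s\<in>S. \<not> s \<le> c"
    have "a \<le> c" using \<open>a \<le> p\<close> c(1) by (rule order_trans)
    then have "c \<in> P" using c(2) unfolding P_def by blast
    then show "c = p" using maximal c(1) by blast
  qed
  then show thesis using that \<open>a \<le> p\<close> avoids by blast
qed

lemma lat_compact_iter_square: "lat_compact b \<Longrightarrow> lat_compact (iter_square m b n)"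
  by (induction n) (auto simp: lat_compact_mult)

lemma iter_square_antimono: "i \<le> j \<Longrightarrow> iter_square m b j \<le> iter_square m b i"
  using lift_Suc_antimono_le[of "iter_square m b"] by (simp add: mult_le_left)

text \<open>Semiprimes are intersections of primes: the squares of b form a multiplicative system
  avoiding a semiprime a.\<close>
lemma semiprime_exists_prime:
  assumes "lat_semiprime m a" "lat_compact b" "\<not> b \<le> a"
  obtains p where "lat_prime m p" "a \<le> p" "\<not> b \<le> p"
proof -
  let ?S = "range (iter_square m b)"
  have "\<exists>u\<in>?S. u \<le> m s t" if st: "s \<in> ?S" "t \<in> ?S" for s t
  proof -
    obtain i j where "s = iter_square m b i" "t = iter_square m b j" using st by blast
    then have "iter_square m b (Suc (max i j)) \<le> m s t"
      by (simp add: mult_mono iter_square_antimono)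
    then show ?thesis by blast
  qed
  then obtain p where "lat_prime m p" "a \<le> p" "\<forall>s\<in>?S. \<not> s \<le> p"
    using exists_prime_avoiding[of ?S a] assms lat_compact_iter_square iter_square_not_le_semiprime
    by blast
  then show thesis using that by (metis rangeI iter_square.simps(1))
qed

end

section \<open>The Zariski topology and Spec*\<close>

lemma supp_eq_Diff_zarV: "supp m a = primes m - zarV m a"
  unfolding supp_def zarV_def by auto

lemma zarV_subset_primes: "zarV m a \<subseteq> primes m"
  unfolding zarV_def by auto

lemma zarV_bot: "zarV m bot = primes m"
  unfolding zarV_def by auto

lemma zarV_sup: "zarV m (sup a b) = zarV m a \<inter> zarV m b"
  unfolding zarV_def by auto

lemma zarV_antimono: "a \<le> b \<Longrightarrow> zarV m b \<subseteq> zarV m a"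
  unfolding zarV_def by (auto intro: order_trans)

lemma Diff_supp_eq_zarV: "primes m - supp m a = zarV m a"
  unfolding supp_def zarV_def by auto

lemma supp_mono: "a \<le> b \<Longrightarrow> supp m a \<subseteq> supp m b"
  unfolding supp_def by (auto intro: order_trans)

lemma supp_sup: "supp m (sup a b) = supp m a \<union> supp m b"
  unfolding supp_def by auto

lemma supp_Sup: "supp m (Sup A) = \<Union> (supp m ` A)"
  unfolding supp_def by (auto simp: Sup_le_iff)

context ideal_lat
begin

lemma zarV_top: "zarV m top = {}"
  unfolding zarV_def primes_def using prime_not_top_le by auto

lemma zarV_mult: "zarV m (m a b) = zarV m a \<union> zarV m b"
  unfolding zarV_def primes_def using prime_mult_le_iff by auto

lemma supp_top: "supp m top = primes m"
  unfolding supp_def primes_def using prime_not_top_le by auto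

lemma supp_mult: "supp m (m a b) = supp m a \<inter> supp m b"
  unfolding supp_def primes_def using prime_mult_le_iff by auto

lemma openin_zariski: "openin (zariski m) U \<longleftrightarrow> (\<exists>a. U = supp m a)"
proof -
  have "istopology (\<lambda>U. \<exists>a. U = supp m a)"
    unfolding istopology_def
  proof (intro conjI allI impI)
    fix S T assume "\<exists>a. S = supp m a" "\<exists>a. T = supp m a"
    then show "\<exists>a. S \<inter> T = supp m a" by (metis supp_mult)
  next
    fix K assume K: "\<forall>S\<in>K. \<exists>a. S = supp m a"
    have "\<Union>K \<subseteq> supp m (Sup {a. supp m a \<in> K})"
    proof
      fix x assume "x \<in> \<Union>K"
      then obtain S where "S \<in> K" "x \<in> S" by blast
      moreover obtain a where "S = supp m a" using K \<open>S \<in> K\<close> by blast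
      ultimately show "x \<in> supp m (Sup {a. supp m a \<in> K})" unfolding supp_Sup by blast
    qed
    moreover have "supp m (Sup {a. supp m a \<in> K}) \<subseteq> \<Union>K" unfolding supp_Sup by blast
    ultimately show "\<exists>a. \<Union>K = supp m a" by blast
  qed
  then show ?thesis unfolding zariski_def by (simp flip: supp_eq_Diff_zarV)
qed

lemma topspace_zariski: "topspace (zariski m) = primes m"
proof -
  have "openin (zariski m) (primes m)" unfolding openin_zariski by (metis supp_top)
  moreover have "U \<subseteq> primes m" if "openin (zariski m) U" for U
    using that unfolding openin_zariski supp_def by blast
  ultimately show ?thesis unfolding topspace_def by blast
qed

lemma compactin_zariski_supp:
  assumes "lat_compact c"
  shows "compactin (zariski m) (supp m c)"
  unfolding compactin_def
proof (intro conjI allI impI)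
  show "supp m c \<subseteq> topspace (zariski m)" by (auto simp: topspace_zariski supp_def)
  fix \<U> assume \<U>: "(\<forall>U\<in>\<U>. openin (zariski m) U) \<and> supp m c \<subseteq> \<Union>\<U>"
  define A where "A = {a. supp m a \<in> \<U>}"
  have \<U>_eq: "\<U> = supp m ` A" using \<U> unfolding A_def openin_zariski by auto
  \<comment> \<open>A prime above Sup A avoiding this multiplicative system would be a point of
    supp c outside the cover.\<close>
  define S where "S = {s. lat_compact s \<and> supp m c \<subseteq> supp m s}"
  have "\<exists>s\<in>S. s \<le> Sup A"
  proof (rule ccontr)
    assume "\<not> (\<exists>s\<in>S. s \<le> Sup A)"
    moreover have "\<exists>u\<in>S. u \<le> m s t" if "s \<in> S" "t \<in> S" for s t
    proof -
      have "m s t \<in> S" using that lat_compact_mult unfolding S_def by (simp add: supp_mult)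
      then show ?thesis by blast
    qed
    moreover have "c \<in> S" using assms unfolding S_def by simp
    ultimately obtain p where p: "lat_prime m p" "Sup A \<le> p" "\<forall>s\<in>S. \<not> s \<le> p"
      using exists_prime_avoiding[of S "Sup A"] unfolding S_def by blast
    then have "p \<in> supp m c" using \<open>c \<in> S\<close> unfolding supp_def primes_def by blast
    moreover have "p \<notin> supp m (Sup A)" using p(2) unfolding supp_def by blast
    ultimately show False using \<U> \<U>_eq supp_Sup[of m A] by blast
  qed
  then obtain s where "s \<in> S" "s \<le> Sup A" by blast
  then obtain A' where "A' \<subseteq> A" "finite A'" "s \<le> Sup A'"
    unfolding S_def lat_compact_def by blast
  have "supp m c \<subseteq> supp m s" using \<open>s \<in> S\<close> unfolding S_def by blast
  also have "\<dots> \<subseteq> \<Union> (supp m ` A')" using \<open>s \<le> Sup A'\<close> supp_mono supp_Sup by metis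
  finally show "\<exists>\<F>. finite \<F> \<and> \<F> \<subseteq> \<U> \<and> supp m c \<subseteq> \<Union>\<F>"
    using \<open>A' \<subseteq> A\<close> \<open>finite A'\<close> \<U>_eq by blast
qed

lemma qc_open_zariski_imp_supp:
  assumes "openin (zariski m) U" "compactin (zariski m) U"
  obtains c where "lat_compact c" "U = supp m c"
proof -
  obtain a where a: "U = supp m a" using assms(1) unfolding openin_zariski by blast
  define B where "B = {b. lat_compact b \<and> b \<le> a}"
  have "U = \<Union> (supp m ` B)" unfolding a B_def by (metis Sup_compacts_below supp_Sup)
  moreover have "\<forall>V\<in>supp m ` B. openin (zariski m) V" unfolding openin_zariski by blast
  ultimately obtain \<F> where "finite \<F>" "\<F> \<subseteq> supp m ` B" "U \<subseteq> \<Union>\<F>"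
    using assms(2) unfolding compactin_def by (metis order_refl)
  then obtain B' where B': "B' \<subseteq> B" "finite B'" "U \<subseteq> \<Union> (supp m ` B')"
    by (metis finite_subset_image)
  have "lat_compact (Sup B')" using B' lat_compact_Sup_finite unfolding B_def by blast
  moreover have "U = supp m (Sup B')"
  proof
    show "supp m (Sup B') \<subseteq> U" unfolding a using B'(1) unfolding B_def
      by (intro supp_mono) (auto intro: Sup_least)
  qed (use B' in \<open>simp add: supp_Sup\<close>)
  ultimately show thesis using that by blast
qed

lemma qc_open_zariski_complements:
  "{primes m - U | U. openin (zariski m) U \<and> compactin (zariski m) U} = {zarV m c | c. lat_compact c}"
proof (intro set_eqI iffI)
  fix V assume "V \<in> {primes m - U | U. openin (zariski m) U \<and> compactin (zariski m) U}"
  then obtain U where V: "V = primes m - U" "openin (zariski m) U" "compactin (zariski m) U"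
    by blast
  obtain c where "lat_compact c" "U = supp m c" using qc_open_zariski_imp_supp[OF V(2,3)] by blast
  then show "V \<in> {zarV m c | c. lat_compact c}" using V(1) Diff_supp_eq_zarV by blast
next
  fix V assume "V \<in> {zarV m c | c. lat_compact c}"
  then obtain c where c: "lat_compact c" "V = primes m - supp m c"
    by (auto simp: Diff_supp_eq_zarV)
  moreover have "openin (zariski m) (supp m c)" unfolding openin_zariski by blast
  ultimately show "V \<in> {primes m - U | U. openin (zariski m) U \<and> compactin (zariski m) U}"
    using compactin_zariski_supp by blast
qed

lemma spec_star_eq_base:
  "spec_star m = topology (arbitrary union_of (\<lambda>S. \<exists>c. lat_compact c \<and> S = zarV m c))"
proof -
  have "(\<lambda>S. \<exists>\<F>. \<F> \<subseteq> {zarV m c | c. lat_compact c} \<and> S = \<Union>\<F>)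
      = arbitrary union_of (\<lambda>S. \<exists>c. lat_compact c \<and> S = zarV m c)"
    unfolding union_of_def arbitrary_def by (intro ext iffI) blast+
  then show ?thesis unfolding spec_star_def qc_open_zariski_complements by simp
qed

lemma openin_spec_star:
  "openin (spec_star m) S \<longleftrightarrow> (\<forall>p\<in>S. \<exists>c. lat_compact c \<and> p \<in> zarV m c \<and> zarV m c \<subseteq> S)"
proof -
  have "istopology (arbitrary union_of (\<lambda>S. \<exists>c. lat_compact c \<and> S = zarV m c))"
    by (rule istopology_base) (metis zarV_sup lat_compact_sup)
  then show ?thesis by (simp add: spec_star_eq_base arbitrary_union_of_alt) blast
qed

lemma openin_spec_star_zarV: "lat_compact c \<Longrightarrow> openin (spec_star m) (zarV m c)"
  unfolding openin_spec_star by blast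

lemma topspace_spec_star: "topspace (spec_star m) = primes m"
proof -
  have "openin (spec_star m) (primes m)"
    using openin_spec_star_zarV[OF lat_compact_bot] by (simp add: zarV_bot)
  moreover have "U \<subseteq> primes m" if "openin (spec_star m) U" for U
    using that zarV_subset_primes unfolding openin_spec_star by blast
  ultimately show ?thesis unfolding topspace_def by blast
qed

lemma closedin_spec_star_supp: "lat_compact c \<Longrightarrow> closedin (spec_star m) (supp m c)"
  unfolding closedin_def topspace_spec_star Diff_supp_eq_zarV
  by (simp add: openin_spec_star_zarV supp_def)

lemma zarV_finite_subcover:
  assumes c: "lat_compact c" and D: "\<forall>d\<in>D. lat_compact d" and cover: "zarV m c \<subseteq> \<Union> (zarV m ` D)"
  obtains D' where "D' \<subseteq> D" "finite D'" "zarV m c \<subseteq> \<Union> (zarV m ` D')"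
proof -
  \<comment> \<open>A prime above c avoiding this multiplicative system would be a point of V(c)
    outside the cover.\<close>
  define S where "S = {s. lat_compact s \<and> (\<exists>D'\<subseteq>D. finite D' \<and> zarV m s \<subseteq> \<Union> (zarV m ` D'))}"
  have "\<exists>s\<in>S. s \<le> c"
  proof (rule ccontr)
    assume avoid: "\<not> (\<exists>s\<in>S. s \<le> c)"
    have msys: "\<exists>u\<in>S. u \<le> m s t" if st: "s \<in> S" "t \<in> S" for s t
    proof -
      obtain D1 D2 where "D1 \<subseteq> D" "finite D1" "zarV m s \<subseteq> \<Union> (zarV m ` D1)"
        "D2 \<subseteq> D" "finite D2" "zarV m t \<subseteq> \<Union> (zarV m ` D2)"
        using st unfolding S_def by blast
      then have "m s t \<in> S"
        using st lat_compact_mult unfolding S_def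
        by (intro CollectI conjI exI[of _ "D1 \<union> D2"]) (auto simp: zarV_mult)
      then show ?thesis by blast
    qed
    have "top \<in> S" unfolding S_def
      by (intro CollectI conjI exI[of _ "{}"]) (simp_all add: lat_compact_top zarV_top)
    moreover have "\<forall>s\<in>S. lat_compact s" unfolding S_def by blast
    ultimately obtain p where p: "lat_prime m p" "c \<le> p" "\<forall>s\<in>S. \<not> s \<le> p"
      using exists_prime_avoiding[of S c, OF _ _ msys] avoid by blast
    then obtain d where "d \<in> D" "p \<in> zarV m d"
      using cover unfolding zarV_def primes_def by blast
    moreover have "d \<in> S" using \<open>d \<in> D\<close> D unfolding S_def
      by (intro CollectI conjI exI[of _ "{d}"]) auto
    ultimately show False using p unfolding zarV_def by blast
  qed
  then obtain s D' where "s \<le> c" "D' \<subseteq> D" "finite D'" "zarV m s \<subseteq> \<Union> (zarV m ` D')"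
    unfolding S_def by blast
  then show thesis using that zarV_antimono[OF \<open>s \<le> c\<close>] by blast
qed

lemma compactin_spec_star_zarV:
  assumes "lat_compact c"
  shows "compactin (spec_star m) (zarV m c)"
  unfolding compactin_def
proof (intro conjI allI impI)
  show "zarV m c \<subseteq> topspace (spec_star m)" by (simp add: topspace_spec_star zarV_subset_primes)
  fix \<U> assume \<U>: "(\<forall>U\<in>\<U>. openin (spec_star m) U) \<and> zarV m c \<subseteq> \<Union>\<U>"
  define D where "D = {d. lat_compact d \<and> (\<exists>U\<in>\<U>. zarV m d \<subseteq> U)}"
  have "zarV m c \<subseteq> \<Union> (zarV m ` D)"
  proof
    fix p assume "p \<in> zarV m c"
    then obtain U where "U \<in> \<U>" "p \<in> U" using \<U> by blast
    moreover have "openin (spec_star m) U" using \<U> \<open>U \<in> \<U>\<close> by blast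
    ultimately obtain d where "lat_compact d" "p \<in> zarV m d" "zarV m d \<subseteq> U"
      unfolding openin_spec_star by blast
    moreover from this have "d \<in> D" using \<open>U \<in> \<U>\<close> unfolding D_def by blast
    ultimately show "p \<in> \<Union> (zarV m ` D)" by blast
  qed
  moreover have "\<forall>d\<in>D. lat_compact d" unfolding D_def by blast
  ultimately obtain D' where D': "D' \<subseteq> D" "finite D'" "zarV m c \<subseteq> \<Union> (zarV m ` D')"
    using zarV_finite_subcover[OF assms] by blast
  have "\<forall>d\<in>D'. \<exists>U. U \<in> \<U> \<and> zarV m d \<subseteq> U" using D'(1) unfolding D_def by blast
  then obtain U where U: "\<forall>d\<in>D'. U d \<in> \<U> \<and> zarV m d \<subseteq> U d" by metis
  have "zarV m c \<subseteq> \<Union> (U ` D')" using D'(3) U by blast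
  then show "\<exists>\<F>. finite \<F> \<and> \<F> \<subseteq> \<U> \<and> zarV m c \<subseteq> \<Union>\<F>"
    using D'(2) U by (intro exI[of _ "U ` D'"]) auto
qed

lemma Union_zarV_finite:
  "finite C \<Longrightarrow> \<forall>c\<in>C. lat_compact c \<Longrightarrow> \<exists>d. lat_compact d \<and> \<Union> (zarV m ` C) = zarV m d"
proof (induction C rule: finite_induct)
  case empty
  then show ?case using lat_compact_top zarV_top by auto
next
  case (insert c C)
  then obtain d where "lat_compact d" "\<Union> (zarV m ` C) = zarV m d" by auto
  then have "\<Union> (zarV m ` insert c C) = zarV m (m c d)" by (simp add: zarV_mult)
  then show ?case using insert.prems \<open>lat_compact d\<close> lat_compact_mult
    by (intro exI[of _ "m c d"]) simp
qed

lemma qc_open_spec_star: "qc_open (spec_star m) W \<longleftrightarrow> (\<exists>c. lat_compact c \<and> W = zarV m c)"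
proof
  assume W: "qc_open (spec_star m) W"
  define C where "C = {c. lat_compact c \<and> zarV m c \<subseteq> W}"
  have "W \<subseteq> \<Union> (zarV m ` C)" using W unfolding qc_open_def openin_spec_star C_def by blast
  moreover have "\<forall>V\<in>zarV m ` C. openin (spec_star m) V"
    unfolding C_def using openin_spec_star_zarV by blast
  ultimately obtain \<F> where \<F>: "finite \<F>" "\<F> \<subseteq> zarV m ` C" "W \<subseteq> \<Union>\<F>"
    using W unfolding qc_open_def compactin_def by meson
  then obtain C' where C': "C' \<subseteq> C" "finite C'" "\<F> = zarV m ` C'"
    using finite_subset_image[OF \<F>(1,2)] by blast
  have "W = \<Union> (zarV m ` C')"
  proof
    show "W \<subseteq> \<Union> (zarV m ` C')" using \<F>(3) C'(3) by simp
    show "\<Union> (zarV m ` C') \<subseteq> W" using C'(1) unfolding C_def by blast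
  qed
  moreover obtain d where "lat_compact d" "\<Union> (zarV m ` C') = zarV m d"
    using Union_zarV_finite[OF C'(2)] C'(1) unfolding C_def by blast
  ultimately show "\<exists>c. lat_compact c \<and> W = zarV m c" by (intro exI[of _ d]) simp
qed (auto simp: qc_open_def openin_spec_star_zarV compactin_spec_star_zarV)

lemma in_closure_of_spec_star:
  assumes "p \<in> primes m" "q \<in> primes m" "q \<le> p"
  shows "q \<in> spec_star m closure_of {p}"
  unfolding in_closure_of topspace_spec_star
proof (intro conjI allI impI)
  show "q \<in> primes m" by fact
  fix T assume "q \<in> T \<and> openin (spec_star m) T"
  then obtain c where "lat_compact c" "q \<in> zarV m c" "zarV m c \<subseteq> T"
    unfolding openin_spec_star by blast
  moreover from this have "p \<in> zarV m c" using assms unfolding zarV_def by (auto intro: order_trans)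
  ultimately show "\<exists>y. y \<in> {p} \<and> y \<in> T" by blast
qed

lemma irreducible_spec_star_compact_le_Sup:
  assumes C: "irreducible_in (spec_star m) C" and c: "lat_compact c" "c \<le> Sup C"
  shows "\<exists>q\<in>C. c \<le> q"
proof -
  have "C \<subseteq> primes m" "C \<noteq> {}"
    using C unfolding irreducible_in_def topspace_spec_star by auto
  define T where "T = {d. lat_compact d \<and> (\<exists>q\<in>C. d \<le> q)}"
  have T_directed: "\<exists>z\<in>T. x \<le> z \<and> y \<le> z" if "x \<in> T" "y \<in> T" for x y
  proof -
    have "\<not> C \<subseteq> supp m x" "\<not> C \<subseteq> supp m y"
      using that unfolding T_def supp_def by auto
    moreover have "closedin (spec_star m) (supp m x)" "closedin (spec_star m) (supp m y)"
      using that closedin_spec_star_supp unfolding T_def by auto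
    ultimately have "\<not> C \<subseteq> supp m (sup x y)"
      using C unfolding irreducible_in_def supp_sup by blast
    then have "sup x y \<in> T"
      using that \<open>C \<subseteq> primes m\<close> lat_compact_sup unfolding T_def supp_def by blast
    then show ?thesis by (intro bexI[of _ "sup x y"]) simp_all
  qed
  have "Sup C \<le> Sup T"
  proof (rule Sup_least)
    fix q assume "q \<in> C"
    then show "q \<le> Sup T"
      unfolding le_iff_compacts_le[of q] T_def by (blast intro: Sup_upper)
  qed
  then have "c \<le> Sup T" using c(2) by order
  moreover have "bot \<in> T" using \<open>C \<noteq> {}\<close> lat_compact_bot unfolding T_def by auto
  then have "T \<noteq> {}" by blast
  ultimately have "\<exists>z\<in>T. c \<le> z"
    by (rule lat_compact_le_Sup_directed[OF c(1) _ _ T_directed])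
  then obtain z q where "q \<in> C" "c \<le> z" "z \<le> q" unfolding T_def by blast
  then show ?thesis using order_trans[of c z q] by blast
qed

lemma irreducible_spec_star_Sup_prime:
  assumes C: "irreducible_in (spec_star m) C"
  shows "lat_prime m (Sup C)"
proof -
  have "C \<subseteq> primes m" using C unfolding irreducible_in_def topspace_spec_star by auto
  note below_C = irreducible_spec_star_compact_le_Sup[OF C]
  show ?thesis unfolding lat_prime_def
  proof (intro conjI allI impI notI)
    assume "Sup C = top"
    then show False
      using below_C[OF lat_compact_top] \<open>C \<subseteq> primes m\<close> prime_not_top_le unfolding primes_def by auto
  next
    fix x y assume "m x y \<le> Sup C"
    show "x \<le> Sup C \<or> y \<le> Sup C"
    proof (rule ccontr)
      assume "\<not> (x \<le> Sup C \<or> y \<le> Sup C)"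
      then obtain x' y' where x': "lat_compact x'" "x' \<le> x" "\<not> x' \<le> Sup C"
        and y': "lat_compact y'" "y' \<le> y" "\<not> y' \<le> Sup C"
        by (meson obtain_compact_not_le)
      have "m x' y' \<le> Sup C" using x' y' \<open>m x y \<le> Sup C\<close> mult_mono order_trans by blast
      then obtain q where "q \<in> C" "m x' y' \<le> q" using below_C x' y' lat_compact_mult by blast
      then have "x' \<le> q \<or> y' \<le> q"
        using \<open>C \<subseteq> primes m\<close> prime_mult_le_iff unfolding primes_def by blast
      then show False using x' y' \<open>q \<in> C\<close> by (meson Sup_upper order_trans)
    qed
  qed
qed

text \<open>The generic point of an irreducible closed set of primes is its supremum.\<close>
lemma spec_star_sober:
  assumes C: "closedin (spec_star m) C" "irreducible_in (spec_star m) C"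
  shows "\<exists>p\<in>C. spec_star m closure_of {p} = C"
proof -
  have "C \<subseteq> primes m" using C(2) unfolding irreducible_in_def topspace_spec_star by auto
  have "Sup C \<in> primes m" using irreducible_spec_star_Sup_prime[OF C(2)] unfolding primes_def by blast
  have "Sup C \<in> C"
  proof (rule ccontr)
    assume "Sup C \<notin> C"
    moreover have "openin (spec_star m) (primes m - C)"
      using C(1) unfolding closedin_def topspace_spec_star by simp
    ultimately obtain c where c: "lat_compact c" "Sup C \<in> zarV m c" "zarV m c \<subseteq> primes m - C"
      using \<open>Sup C \<in> primes m\<close> unfolding openin_spec_star by blast
    then obtain q where "q \<in> C" "c \<le> q"
      using irreducible_spec_star_compact_le_Sup[OF C(2)] unfolding zarV_def by blast
    then show False using c(3) \<open>C \<subseteq> primes m\<close> unfolding zarV_def by blast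
  qed
  moreover have "spec_star m closure_of {Sup C} = C"
  proof
    show "spec_star m closure_of {Sup C} \<subseteq> C"
      using \<open>Sup C \<in> C\<close> C(1) by (simp add: closure_of_minimal)
    show "C \<subseteq> spec_star m closure_of {Sup C}"
      using in_closure_of_spec_star \<open>Sup C \<in> primes m\<close> \<open>C \<subseteq> primes m\<close> Sup_upper by blast
  qed
  ultimately show ?thesis by blast
qed

lemma spectral_space_spec_star: "spectral_space (spec_star m)"
  unfolding spectral_space_def
proof (intro conjI allI impI)
  show "t0_space (spec_star m)" unfolding t0_space_def topspace_spec_star
  proof (intro ballI impI)
    fix p q assume "p \<in> primes m" "q \<in> primes m" "p \<noteq> q"
    then consider "\<not> p \<le> q" | "\<not> q \<le> p" by fastforce
    then show "\<exists>U. openin (spec_star m) U \<and> (p \<notin> U \<longleftrightarrow> q \<in> U)"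
    proof cases
      case 1
      then obtain b where "lat_compact b" "b \<le> p" "\<not> b \<le> q" by (rule obtain_compact_not_le)
      then show ?thesis using \<open>p \<in> primes m\<close> openin_spec_star_zarV unfolding zarV_def by blast
    next
      case 2
      then obtain b where "lat_compact b" "b \<le> q" "\<not> b \<le> p" by (rule obtain_compact_not_le)
      then show ?thesis using \<open>q \<in> primes m\<close> openin_spec_star_zarV unfolding zarV_def by blast
    qed
  qed
  show "compact_space (spec_star m)" unfolding compact_space_def topspace_spec_star
    using compactin_spec_star_zarV[OF lat_compact_bot] by (simp add: zarV_bot)
next
  fix U V assume "qc_open (spec_star m) U" "qc_open (spec_star m) V"
  then show "qc_open (spec_star m) (U \<inter> V)"
    unfolding qc_open_spec_star by (metis zarV_sup lat_compact_sup)
next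
  fix U p assume "openin (spec_star m) U" "p \<in> U"
  then show "\<exists>W. qc_open (spec_star m) W \<and> p \<in> W \<and> W \<subseteq> U"
    unfolding qc_open_spec_star openin_spec_star by blast
next
  fix C assume "closedin (spec_star m) C" "irreducible_in (spec_star m) C"
  then show "\<exists>p\<in>C. spec_star m closure_of {p} = C" by (rule spec_star_sober)
qed

end

section \<open>Spectral spaces and the patch topology\<close>

lemma qc_open_Inter:
  assumes "spectral_space X" "finite \<G>" "\<forall>U\<in>\<G>. qc_open X U"
  shows "qc_open X (topspace X \<inter> \<Inter>\<G>)"
  using assms(2,3)
proof (induction \<G> rule: finite_induct)
  case empty
  then show ?case using assms(1) unfolding spectral_space_def qc_open_def compact_space_def by simp
next
  case (insert U \<G>)
  then have "U \<subseteq> topspace X" unfolding qc_open_def by (simp add: openin_subset)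
  then have "topspace X \<inter> \<Inter>(insert U \<G>) = U \<inter> (topspace X \<inter> \<Inter>\<G>)" by blast
  then show ?case using insert assms(1) unfolding spectral_space_def by simp
qed

lemma irreducible_in_continuous_map_image:
  assumes f: "continuous_map X Y f" and C: "irreducible_in X C"
  shows "irreducible_in Y (f ` C)"
  unfolding irreducible_in_def
proof (intro conjI allI impI)
  have "C \<noteq> {}" "C \<subseteq> topspace X"
    and irr: "\<And>A B. closedin X A \<Longrightarrow> closedin X B \<Longrightarrow> C \<subseteq> A \<union> B \<Longrightarrow> C \<subseteq> A \<or> C \<subseteq> B"
    using C unfolding irreducible_in_def by blast+
  then show "f ` C \<noteq> {}" "f ` C \<subseteq> topspace Y"
    using continuous_map_image_subset_topspace[OF f] by blast+
  fix A B assume AB: "closedin Y A" "closedin Y B" "f ` C \<subseteq> A \<union> B"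
  have "closedin X {x \<in> topspace X. f x \<in> A}" "closedin X {x \<in> topspace X. f x \<in> B}"
    using closedin_continuous_map_preimage[OF f] AB(1,2) by blast+
  moreover have "C \<subseteq> {x \<in> topspace X. f x \<in> A} \<union> {x \<in> topspace X. f x \<in> B}"
    using \<open>C \<subseteq> topspace X\<close> AB(3) by blast
  ultimately have "C \<subseteq> {x \<in> topspace X. f x \<in> A} \<or> C \<subseteq> {x \<in> topspace X. f x \<in> B}"
    by (rule irr)
  then show "f ` C \<subseteq> A \<or> f ` C \<subseteq> B" by blast
qed

lemma qc_open_homeomorphic_map_eq:
  assumes "homeomorphic_map X Y f"
  shows "qc_open X U \<longleftrightarrow> U \<subseteq> topspace X \<and> qc_open Y (f ` U)"
  unfolding qc_open_def homeomorphic_map_openness_eq[OF assms, of U]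
    homeomorphic_map_compactness_eq[OF assms, of U] by blast

lemma spectral_space_homeomorphic_map:
  assumes f: "homeomorphic_map X Y f" and Y: "spectral_space Y"
  shows "spectral_space X"
proof -
  have inj: "inj_on f (topspace X)" and onto: "f ` topspace X = topspace Y"
    using f by (simp_all add: homeomorphic_imp_injective_map homeomorphic_imp_surjective_map)
  have XY: "X homeomorphic_space Y" using f homeomorphic_map_imp_homeomorphic_space by blast
  note qc = qc_open_homeomorphic_map_eq[OF f]
  have Y_Int: "\<And>U V. qc_open Y U \<Longrightarrow> qc_open Y V \<Longrightarrow> qc_open Y (U \<inter> V)"
    and Y_basis: "\<And>U y. openin Y U \<Longrightarrow> y \<in> U \<Longrightarrow> \<exists>W. qc_open Y W \<and> y \<in> W \<and> W \<subseteq> U"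
    and Y_sober: "\<And>C. closedin Y C \<Longrightarrow> irreducible_in Y C \<Longrightarrow> \<exists>y\<in>C. Y closure_of {y} = C"
    using Y unfolding spectral_space_def by blast+
  show ?thesis unfolding spectral_space_def
  proof (intro conjI allI impI)
    show "t0_space X" using Y homeomorphic_t0_space[OF XY] unfolding spectral_space_def by blast
    show "compact_space X" using Y homeomorphic_compact_space[OF XY] unfolding spectral_space_def by blast
  next
    fix U V assume "qc_open X U" "qc_open X V"
    then have sub: "U \<subseteq> topspace X" "V \<subseteq> topspace X"
      and fUV: "qc_open Y (f ` U)" "qc_open Y (f ` V)" using qc by blast+
    have "qc_open Y (f ` U \<inter> f ` V)" using Y_Int[OF fUV] .
    moreover have "f ` (U \<inter> V) = f ` U \<inter> f ` V" using inj sub by (simp add: inj_on_image_Int)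
    ultimately show "qc_open X (U \<inter> V)" using sub qc[of "U \<inter> V"] by auto
  next
    fix U x assume U: "openin X U" "x \<in> U"
    have Ux: "U \<subseteq> topspace X" using openin_subset[OF U(1)] .
    have "openin Y (f ` U)" using homeomorphic_map_openness_eq[OF f, of U] U(1) by simp
    then obtain W where W: "qc_open Y W" "f x \<in> W" "W \<subseteq> f ` U"
      using Y_basis U(2) by blast
    define W' where "W' = {z \<in> topspace X. f z \<in> W}"
    have "W' \<subseteq> U"
    proof
      fix z assume "z \<in> W'"
      then have "z \<in> topspace X" "f z \<in> f ` U" using W(3) unfolding W'_def by blast+
      then show "z \<in> U" using inj_on_image_mem_iff[OF inj _ Ux] by blast
    qed
    moreover have "f ` W' = W" using W(3) Ux onto unfolding W'_def by blast
    then have "qc_open X W'" using qc W(1) unfolding W'_def by auto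
    moreover have "x \<in> W'" using U W(2) Ux unfolding W'_def by blast
    ultimately show "\<exists>W. qc_open X W \<and> x \<in> W \<and> W \<subseteq> U" by blast
  next
    fix C assume C: "closedin X C" "irreducible_in X C"
    then have "closedin Y (f ` C)" "irreducible_in Y (f ` C)" and Cx: "C \<subseteq> topspace X"
      using homeomorphic_map_closedness_eq[OF f] closedin_subset
        irreducible_in_continuous_map_image[OF homeomorphic_imp_continuous_map[OF f]] by blast+
    then obtain y where "y \<in> f ` C" "Y closure_of {y} = f ` C" using Y_sober by blast
    then obtain x where x: "x \<in> C" "Y closure_of {f x} = f ` C" by blast
    then have "f ` (X closure_of {x}) = f ` C"
      using homeomorphic_map_closure_of[OF f, of "{x}"] Cx by auto
    then have "X closure_of {x} = C"
      using inj_on_image_eq_iff[OF inj closure_of_subset_topspace Cx] by blast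
    then show "\<exists>x\<in>C. X closure_of {x} = C" using x(1) by blast
  qed
qed

definition fip_in :: "'b topology \<Rightarrow> 'b set set \<Rightarrow> bool" where
  "fip_in X \<K> \<longleftrightarrow> (\<forall>\<G>. finite \<G> \<and> \<G> \<subseteq> \<K> \<longrightarrow> topspace X \<inter> \<Inter>\<G> \<noteq> {})"

lemma fip_in_maximal_extension:
  assumes "fip_in X \<K>" "\<forall>S\<in>\<K>. P S"
  obtains \<M> where "\<K> \<subseteq> \<M>" "\<forall>S\<in>\<M>. P S" "fip_in X \<M>"
    "\<And>S. P S \<Longrightarrow> S \<notin> \<M> \<Longrightarrow> \<exists>\<G>. finite \<G> \<and> \<G> \<subseteq> \<M> \<and> topspace X \<inter> \<Inter>\<G> \<inter> S = {}"
proof -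
  define \<A> where "\<A> = {\<M>. \<K> \<subseteq> \<M> \<and> (\<forall>S\<in>\<M>. P S) \<and> fip_in X \<M>}"
  have "\<exists>\<M>\<in>\<A>. \<forall>\<N>\<in>\<A>. \<M> \<subseteq> \<N> \<longrightarrow> \<N> = \<M>"
  proof (rule subset_Zorn_nonempty)
    show "\<A> \<noteq> {}" using assms unfolding \<A>_def by blast
    fix \<C> assume \<C>: "\<C> \<noteq> {}" "subset.chain \<A> \<C>"
    have "\<C> \<subseteq> \<A>" using \<C>(2) unfolding subset.chain_def by blast
    have "topspace X \<inter> \<Inter>\<G> \<noteq> {}" if \<G>: "finite \<G>" "\<G> \<subseteq> \<Union>\<C>" for \<G>
    proof -
      obtain \<B> where "\<B> \<in> \<C>" "\<G> \<subseteq> \<B>" using finite_subset_Union_chain[OF \<G> \<C>] by blast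
      moreover from this have "fip_in X \<B>" using \<open>\<C> \<subseteq> \<A>\<close> unfolding \<A>_def by blast
      ultimately show ?thesis using \<G>(1) unfolding fip_in_def by blast
    qed
    then have "fip_in X (\<Union>\<C>)" unfolding fip_in_def by blast
    moreover have "\<K> \<subseteq> \<Union>\<C>" "\<forall>S\<in>\<Union>\<C>. P S"
      using \<C>(1) \<open>\<C> \<subseteq> \<A>\<close> unfolding \<A>_def by blast+
    ultimately show "\<Union>\<C> \<in> \<A>" unfolding \<A>_def by blast
  qed
  then obtain \<M> where \<M>: "\<M> \<in> \<A>" and maximal: "\<forall>\<N>\<in>\<A>. \<M> \<subseteq> \<N> \<longrightarrow> \<N> = \<M>" by blast
  show thesis
  proof (rule that)
    show "\<K> \<subseteq> \<M>" "\<forall>S\<in>\<M>. P S" "fip_in X \<M>" using \<M> unfolding \<A>_def by blast+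
    fix S assume S: "P S" "S \<notin> \<M>"
    show "\<exists>\<G>. finite \<G> \<and> \<G> \<subseteq> \<M> \<and> topspace X \<inter> \<Inter>\<G> \<inter> S = {}"
    proof (rule ccontr)
      assume none: "\<not> ?thesis"
      have "fip_in X (insert S \<M>)" unfolding fip_in_def
      proof (intro allI impI)
        fix \<G> assume "finite \<G> \<and> \<G> \<subseteq> insert S \<M>"
        then have "finite (\<G> - {S})" "\<G> - {S} \<subseteq> \<M>" by auto
        then have "topspace X \<inter> \<Inter>(\<G> - {S}) \<inter> S \<noteq> {}" using none by blast
        then show "topspace X \<inter> \<Inter>\<G> \<noteq> {}" by blast
      qed
      then have "insert S \<M> \<in> \<A>" using \<M> S(1) unfolding \<A>_def by blast
      then show False using maximal S(2) by blast
    qed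
  qed
qed

lemma fip_in_closed_members_meet_qc_open:
  assumes X: "spectral_space X" and fip: "fip_in X \<M>"
    and \<G>: "finite \<G>" "\<G> \<subseteq> \<M>" "\<forall>U\<in>\<G>. qc_open X U"
  shows "topspace X \<inter> \<Inter>{S \<in> \<M>. closedin X S} \<inter> \<Inter>\<G> \<noteq> {}"
proof -
  define W where "W = topspace X \<inter> \<Inter>\<G>"
  have "compactin X W" using qc_open_Inter[OF X \<G>(1,3)] unfolding W_def qc_open_def by blast
  moreover have "\<forall>C\<in>{S \<in> \<M>. closedin X S}. closedin X C" by blast
  moreover have "\<forall>\<F>. finite \<F> \<and> \<F> \<subseteq> {S \<in> \<M>. closedin X S} \<longrightarrow> W \<inter> \<Inter>\<F> \<noteq> {}"
  proof (intro allI impI)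
    fix \<F> assume "finite \<F> \<and> \<F> \<subseteq> {S \<in> \<M>. closedin X S}"
    then have "topspace X \<inter> \<Inter>(\<G> \<union> \<F>) \<noteq> {}"
      using fip \<G> unfolding fip_in_def by blast
    then show "W \<inter> \<Inter>\<F> \<noteq> {}" unfolding W_def by blast
  qed
  ultimately have "W \<inter> \<Inter>{S \<in> \<M>. closedin X S} \<noteq> {}" unfolding compactin_fip by blast
  then show ?thesis unfolding W_def by blast
qed

lemma maximal_fip_in_closed_members_irreducible:
  assumes X: "spectral_space X"
    and \<M>: "\<forall>S\<in>\<M>. closedin X S \<or> qc_open X S" "fip_in X \<M>"
    and maximal: "\<And>S. closedin X S \<Longrightarrow> S \<notin> \<M>
                   \<Longrightarrow> \<exists>\<G>. finite \<G> \<and> \<G> \<subseteq> \<M> \<and> topspace X \<inter> \<Inter>\<G> \<inter> S = {}"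
  shows "irreducible_in X (topspace X \<inter> \<Inter>{S \<in> \<M>. closedin X S})"
    (is "irreducible_in X ?Z")
  unfolding irreducible_in_def
proof (intro conjI allI impI)
  note Z_meets = fip_in_closed_members_meet_qc_open[OF X \<M>(2)]
  show "?Z \<noteq> {}" using Z_meets[of "{}"] by simp
  show "?Z \<subseteq> topspace X" by blast
  fix A B assume AB: "closedin X A" "closedin X B" "?Z \<subseteq> A \<union> B"
  show "?Z \<subseteq> A \<or> ?Z \<subseteq> B"
  proof (rule ccontr)
    assume "\<not> (?Z \<subseteq> A \<or> ?Z \<subseteq> B)"
    then have "A \<notin> \<M>" "B \<notin> \<M>" using AB by blast+
    then obtain \<G>\<^sub>A \<G>\<^sub>B where
      A: "finite \<G>\<^sub>A" "\<G>\<^sub>A \<subseteq> \<M>" "topspace X \<inter> \<Inter>\<G>\<^sub>A \<inter> A = {}" and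
      B: "finite \<G>\<^sub>B" "\<G>\<^sub>B \<subseteq> \<M>" "topspace X \<inter> \<Inter>\<G>\<^sub>B \<inter> B = {}"
      using maximal AB(1,2) by metis
    define \<G> where "\<G> = {U \<in> \<G>\<^sub>A \<union> \<G>\<^sub>B. qc_open X U}"
    have "finite \<G>" "\<G> \<subseteq> \<M>" "\<forall>U\<in>\<G>. qc_open X U" using A B unfolding \<G>_def by auto
    then have "?Z \<inter> \<Inter>\<G> \<noteq> {}" by (rule Z_meets)
    then obtain z where z: "z \<in> ?Z" "z \<in> \<Inter>\<G>" by blast
    have "z \<in> S" if S: "S \<in> \<G>\<^sub>A \<union> \<G>\<^sub>B" for S
    proof (cases "qc_open X S")
      case True
      then show ?thesis using z(2) S unfolding \<G>_def by blast
    next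
      case False
      then have "closedin X S" "S \<in> \<M>" using S A(2) B(2) \<M>(1) by blast+
      then show ?thesis using z(1) by blast
    qed
    moreover have "z \<in> topspace X" using z(1) by blast
    ultimately show False using A(3) B(3) AB(3) z(1) by blast
  qed
qed

text \<open>Compactness of the patch topology: a maximal family with the finite intersection property
  is built by Zorn's lemma, and the generic point of the intersection of its closed members lies
  in every member.\<close>
lemma spectral_patch_fip:
  assumes X: "spectral_space X"
    and patch: "\<forall>S\<in>\<K>. closedin X S \<or> qc_open X S" and fip: "fip_in X \<K>"
  shows "topspace X \<inter> \<Inter>\<K> \<noteq> {}"
proof -
  obtain \<M> where "\<K> \<subseteq> \<M>" and \<M>: "\<forall>S\<in>\<M>. closedin X S \<or> qc_open X S" "fip_in X \<M>"
    and maximal: "\<And>S. closedin X S \<Longrightarrow> S \<notin> \<M>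
                   \<Longrightarrow> \<exists>\<G>. finite \<G> \<and> \<G> \<subseteq> \<M> \<and> topspace X \<inter> \<Inter>\<G> \<inter> S = {}"
    by (rule fip_in_maximal_extension[OF fip patch]) blast
  define Z where "Z = topspace X \<inter> \<Inter>{S \<in> \<M>. closedin X S}"
  have "Z = \<Inter>(insert (topspace X) {S \<in> \<M>. closedin X S})" unfolding Z_def by blast
  moreover have "closedin X (\<Inter>(insert (topspace X) {S \<in> \<M>. closedin X S}))"
    by (rule closedin_Inter) auto
  moreover have "irreducible_in X Z"
    unfolding Z_def using maximal_fip_in_closed_members_irreducible[OF X \<M> maximal] by blast
  ultimately obtain g where g: "g \<in> Z" "X closure_of {g} = Z"
    using X unfolding spectral_space_def by auto
  have "g \<in> S" if S: "S \<in> \<M>" for S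
  proof (cases "closedin X S")
    case True
    then show ?thesis using g(1) S unfolding Z_def by blast
  next
    case False
    then have "qc_open X S" using \<M>(1) S by blast
    then obtain y where "y \<in> Z" "y \<in> S"
      using fip_in_closed_members_meet_qc_open[OF X \<M>(2), of "{S}"] S unfolding Z_def by blast
    then have "y \<in> X closure_of {g}" using g(2) by simp
    then show ?thesis using \<open>y \<in> S\<close> \<open>qc_open X S\<close> unfolding qc_open_def in_closure_of by blast
  qed
  then show ?thesis using g(1) \<open>\<K> \<subseteq> \<M>\<close> unfolding Z_def by blast
qed

lemma spectral_closed_finite_subcover:
  assumes X: "spectral_space X" and Y: "closedin X Y" "Y \<subseteq> \<Union>\<F>"
    and \<F>: "\<forall>Z\<in>\<F>. qc_open X (topspace X - Z)"
  obtains \<F>' where "finite \<F>'" "\<F>' \<subseteq> \<F>" "Y \<subseteq> \<Union>\<F>'"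
proof -
  let ?\<K> = "insert Y ((\<lambda>Z. topspace X - Z) ` \<F>)"
  have patch: "\<forall>S\<in>?\<K>. closedin X S \<or> qc_open X S" using Y(1) \<F> by blast
  have "x \<notin> \<Inter>?\<K>" for x using Y(2) by auto
  then have "\<not> fip_in X ?\<K>" using spectral_patch_fip[OF X patch] by blast
  then obtain \<G> where \<G>: "finite \<G>" "\<G> \<subseteq> ?\<K>" "topspace X \<inter> \<Inter>\<G> = {}"
    unfolding fip_in_def by blast
  have "\<exists>\<F>'\<subseteq>\<F>. finite \<F>' \<and> \<G> - {Y} = (\<lambda>Z. topspace X - Z) ` \<F>'"
    by (rule finite_subset_image) (use \<G>(1,2) in auto)
  then obtain \<F>' where \<F>': "\<F>' \<subseteq> \<F>" "finite \<F>'" "\<G> - {Y} = (\<lambda>Z. topspace X - Z) ` \<F>'"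
    by blast
  have "Y \<subseteq> \<Union>\<F>'"
  proof
    fix y assume "y \<in> Y"
    then have "y \<in> topspace X" using closedin_subset[OF Y(1)] by blast
    then obtain G where "G \<in> \<G>" "y \<notin> G" using \<G>(3) by blast
    then have "G \<in> \<G> - {Y}" using \<open>y \<in> Y\<close> by blast
    then obtain Z where "Z \<in> \<F>'" "G = topspace X - Z" using \<F>'(3) by blast
    then show "y \<in> \<Union>\<F>'" using \<open>y \<in> topspace X\<close> \<open>y \<notin> G\<close> by blast
  qed
  then show thesis using that \<F>'(1,2) by blast
qed

lemma closed_thomason_subset_imp_qc_open_complement:
  assumes X: "spectral_space X" and Y: "closedin X Y" "thomason_subset X Y"
  shows "qc_open X (topspace X - Y)"
proof -
  obtain \<F> where \<F>: "\<forall>Z\<in>\<F>. Z \<subseteq> topspace X \<and> qc_open X (topspace X - Z)" "Y = \<Union>\<F>"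
    using Y(2) unfolding thomason_subset_def by blast
  then obtain \<F>' where "finite \<F>'" "\<F>' \<subseteq> \<F>" "Y \<subseteq> \<Union>\<F>'"
    using spectral_closed_finite_subcover[OF X Y(1)] by blast
  then have "topspace X - Y = topspace X \<inter> \<Inter>((\<lambda>Z. topspace X - Z) ` \<F>')"
    using \<F>(2) by blast
  moreover have "qc_open X (topspace X \<inter> \<Inter>((\<lambda>Z. topspace X - Z) ` \<F>'))"
    using qc_open_Inter[OF X] \<open>finite \<F>'\<close> \<open>\<F>' \<subseteq> \<F>\<close> \<F>(1) by blast
  ultimately show ?thesis by simp
qed

section \<open>Support data coming from a map to Spec*\<close>

locale canonical_morphism = ideal_lat m for m :: "'a::complete_lattice \<Rightarrow> 'a \<Rightarrow> 'a" +
  fixes X :: "'b topology" and \<sigma> :: "'a \<Rightarrow> 'b set" and f :: "'b \<Rightarrow> 'a"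
  assumes continuous: "continuous_map X (spec_star m) f"
    and sigma_eq: "\<And>a. lat_compact a \<Longrightarrow> \<sigma> a = {x \<in> topspace X. f x \<in> supp m a}"
begin

lemma prime_image: "x \<in> topspace X \<Longrightarrow> lat_prime m (f x)"
  using continuous_map_image_subset_topspace[OF continuous]
  unfolding topspace_spec_star primes_def by blast

lemma mem_sigma: "lat_compact b \<Longrightarrow> x \<in> \<sigma> b \<longleftrightarrow> x \<in> topspace X \<and> \<not> b \<le> f x"
  using sigma_eq prime_image unfolding supp_def primes_def by blast

lemma sigma_subset: "lat_compact b \<Longrightarrow> \<sigma> b \<subseteq> topspace X"
  using mem_sigma by blast

lemma sigma_sup:
  assumes "lat_compact b" "lat_compact c"
  shows "\<sigma> (sup b c) = \<sigma> b \<union> \<sigma> c"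
  using mem_sigma[OF lat_compact_sup[OF assms]] mem_sigma[OF assms(1)] mem_sigma[OF assms(2)]
  by auto

lemma sigma_mult:
  assumes "lat_compact b" "lat_compact c"
  shows "\<sigma> (m b c) = \<sigma> b \<inter> \<sigma> c"
  using mem_sigma[OF lat_compact_mult[OF assms]] mem_sigma[OF assms(1)] mem_sigma[OF assms(2)]
    prime_mult_le_iff[OF prime_image]
  by auto

lemma closedin_sigma: "lat_compact c \<Longrightarrow> closedin X (\<sigma> c)"
  using closedin_continuous_map_preimage[OF continuous closedin_spec_star_supp] sigma_eq by simp

lemma Diff_sigma_eq: "lat_compact c \<Longrightarrow> topspace X - \<sigma> c = {x \<in> topspace X. f x \<in> zarV m c}"
  using prime_image by (auto simp: mem_sigma zarV_def primes_def)

lemma image_Diff_sigma: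
  assumes onto: "f ` topspace X = primes m" and c: "lat_compact c"
  shows "f ` (topspace X - \<sigma> c) = zarV m c"
proof
  show "f ` (topspace X - \<sigma> c) \<subseteq> zarV m c" by (auto simp: Diff_sigma_eq[OF c])
  show "zarV m c \<subseteq> f ` (topspace X - \<sigma> c)"
  proof
    fix q assume "q \<in> zarV m c"
    moreover obtain x where "x \<in> topspace X" "q = f x"
      using onto zarV_subset_primes \<open>q \<in> zarV m c\<close> by (metis imageE subsetD)
    ultimately show "q \<in> f ` (topspace X - \<sigma> c)" by (auto simp: Diff_sigma_eq[OF c])
  qed
qed

lemma sd_phi_eq: "sd_phi \<sigma> a = {x \<in> topspace X. \<not> a \<le> f x}"
proof (intro set_eqI iffI)
  fix x assume "x \<in> sd_phi \<sigma> a"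
  then obtain b where "lat_compact b" "b \<le> a" "x \<in> \<sigma> b" unfolding sd_phi_def by blast
  then show "x \<in> {x \<in> topspace X. \<not> a \<le> f x}" by (auto simp: mem_sigma intro: order_trans)
next
  fix x assume x: "x \<in> {x \<in> topspace X. \<not> a \<le> f x}"
  then obtain b where "lat_compact b" "b \<le> a" "\<not> b \<le> f x" by (blast elim: obtain_compact_not_le)
  then show "x \<in> sd_phi \<sigma> a" using x unfolding sd_phi_def by (auto simp: mem_sigma)
qed

lemma sd_phi_compact: "lat_compact b \<Longrightarrow> sd_phi \<sigma> b = \<sigma> b"
  by (auto simp: sd_phi_eq mem_sigma)

lemma sd_phi_mono: "a \<le> b \<Longrightarrow> sd_phi \<sigma> a \<subseteq> sd_phi \<sigma> b"
  by (auto simp: sd_phi_eq intro: order_trans)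

lemma sd_phi_mult: "sd_phi \<sigma> (m a b) = sd_phi \<sigma> a \<inter> sd_phi \<sigma> b"
  using prime_mult_le_iff[OF prime_image] by (auto simp: sd_phi_eq)

lemma sd_phi_lat_radical: "sd_phi \<sigma> (lat_radical m a) = sd_phi \<sigma> a"
proof -
  have "lat_radical m a \<le> f x \<longleftrightarrow> a \<le> f x" if "x \<in> topspace X" for x
    using le_lat_radical[of a m] lat_radical_le_prime[OF prime_image[OF that]] order_trans by blast
  then show ?thesis by (auto simp: sd_phi_eq)
qed

lemma sd_phi_sd_psi_subset: "sd_phi \<sigma> (sd_psi \<sigma> Y) \<subseteq> Y"
proof
  fix x assume "x \<in> sd_phi \<sigma> (sd_psi \<sigma> Y)"
  then have x: "x \<in> topspace X" "\<not> sd_psi \<sigma> Y \<le> f x" by (simp_all add: sd_phi_eq)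
  then obtain b where "lat_compact b" "\<sigma> b \<subseteq> Y" "\<not> b \<le> f x"
    unfolding sd_psi_def Sup_le_iff by blast
  then show "x \<in> Y" using x(1) mem_sigma[of b x] by blast
qed

lemma le_sd_psi_iff: "a \<le> sd_psi \<sigma> Y \<longleftrightarrow> sd_phi \<sigma> a \<subseteq> Y"
proof
  assume "a \<le> sd_psi \<sigma> Y"
  then show "sd_phi \<sigma> a \<subseteq> Y" using sd_phi_mono sd_phi_sd_psi_subset by blast
next
  assume a: "sd_phi \<sigma> a \<subseteq> Y"
  show "a \<le> sd_psi \<sigma> Y" unfolding le_iff_compacts_le[of a]
  proof (intro allI impI)
    fix b assume b: "lat_compact b \<and> b \<le> a"
    then have "\<sigma> b \<subseteq> Y" using a sd_phi_mono sd_phi_compact by blast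
    then show "b \<le> sd_psi \<sigma> Y" using b unfolding sd_psi_def by (simp add: Sup_upper)
  qed
qed

lemma semiprime_sd_psi: "lat_semiprime m (sd_psi \<sigma> Y)"
  unfolding lat_semiprime_def le_sd_psi_iff sd_phi_mult by simp

lemma classifying_imp_qc_open_Diff_sigma:
  assumes cl: "classifying m X \<sigma>" and c: "lat_compact c"
  shows "qc_open X (topspace X - \<sigma> c)"
proof -
  have "thomason_subset X (sd_phi \<sigma> (lat_radical m c))"
    using cl semiprime_lat_radical unfolding classifying_def by blast
  then have "thomason_subset X (\<sigma> c)" by (simp add: sd_phi_lat_radical sd_phi_compact[OF c])
  moreover have "spectral_space X" using cl unfolding classifying_def by blast
  ultimately show ?thesis
    using closed_thomason_subset_imp_qc_open_complement closedin_sigma[OF c] by blast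
qed

lemma classifying_imp_sd_psi_sigma:
  assumes cl: "classifying m X \<sigma>" and c: "lat_compact c"
  shows "sd_psi \<sigma> (\<sigma> c) = lat_radical m c"
proof -
  have "sd_psi \<sigma> (sd_phi \<sigma> (lat_radical m c)) = lat_radical m c"
    using cl semiprime_lat_radical unfolding classifying_def by blast
  then show ?thesis by (simp add: sd_phi_lat_radical sd_phi_compact[OF c])
qed

lemma classifying_imp_qc_open_eq_Diff_sigma:
  assumes cl: "classifying m X \<sigma>" and W: "qc_open X W"
  obtains c where "lat_compact c" "W = topspace X - \<sigma> c"
proof -
  have X: "spectral_space X" using cl unfolding classifying_def by blast
  have "W \<subseteq> topspace X" using W unfolding qc_open_def by (simp add: openin_subset)
  define Y where "Y = topspace X - W"
  have "thomason_subset X Y" unfolding thomason_subset_def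
  proof (intro exI conjI)
    show "Y = \<Union> {Y}" by simp
    show "\<forall>Z\<in>{Y}. Z \<subseteq> topspace X \<and> qc_open X (topspace X - Z)"
      using W \<open>W \<subseteq> topspace X\<close> unfolding Y_def by (simp add: Diff_Diff_Int Int_absorb1)
  qed
  then have Y_eq: "sd_phi \<sigma> (sd_psi \<sigma> Y) = Y" using cl unfolding classifying_def by blast
  define B where "B = {b. lat_compact b \<and> b \<le> sd_psi \<sigma> Y}"
  have "Y \<subseteq> \<Union> (\<sigma> ` B)" using Y_eq unfolding sd_phi_def B_def by blast
  moreover have "closedin X Y" using W unfolding Y_def qc_open_def by blast
  moreover have "\<forall>Z\<in>\<sigma> ` B. qc_open X (topspace X - Z)"
    using classifying_imp_qc_open_Diff_sigma[OF cl] unfolding B_def by blast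
  ultimately obtain \<F> where \<F>: "finite \<F>" "\<F> \<subseteq> \<sigma> ` B" "Y \<subseteq> \<Union>\<F>"
    using spectral_closed_finite_subcover[OF X] by metis
  have "bot \<in> B" using lat_compact_bot unfolding B_def by simp
  moreover have "\<exists>R\<in>\<sigma> ` B. S \<subseteq> R \<and> T \<subseteq> R" if ST: "S \<in> \<sigma> ` B" "T \<in> \<sigma> ` B" for S T
  proof -
    obtain b b' where b: "b \<in> B" "b' \<in> B" "S = \<sigma> b" "T = \<sigma> b'" using ST by blast
    then have "sup b b' \<in> B" unfolding B_def by (simp add: lat_compact_sup)
    moreover have "\<sigma> (sup b b') = S \<union> T" using b sigma_sup unfolding B_def by simp
    ultimately show ?thesis by blast
  qed
  ultimately obtain c where c: "c \<in> B" "\<forall>S\<in>\<F>. S \<subseteq> \<sigma> c"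
    using finite_subset_directed_bound[OF \<F>(1,2), of "(\<subseteq>)"] by blast
  then have "Y \<subseteq> \<sigma> c" using \<F>(3) by blast
  moreover have "\<sigma> c \<subseteq> Y"
    using c(1) le_sd_psi_iff sd_phi_compact unfolding B_def by blast
  ultimately have "W = topspace X - \<sigma> c" using \<open>W \<subseteq> topspace X\<close> unfolding Y_def by blast
  then show thesis using that c(1) unfolding B_def by blast
qed

text \<open>Patch-closed sets cutting out the fibre of f over p.\<close>
definition fibre_family :: "'a \<Rightarrow> 'b set set" where
  "fibre_family p = \<sigma> ` {b. lat_compact b \<and> \<not> b \<le> p}
                    \<union> (\<lambda>c. topspace X - \<sigma> c) ` {c. lat_compact c \<and> c \<le> p}"

lemma fibre_family_point:
  assumes x: "x \<in> topspace X" "x \<in> \<Inter>(fibre_family p)"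
  shows "f x = p"
proof (rule antisym)
  show "f x \<le> p" unfolding le_iff_compacts_le[of "f x"]
  proof (intro allI impI)
    fix b assume b: "lat_compact b \<and> b \<le> f x"
    show "b \<le> p"
    proof (rule ccontr)
      assume "\<not> b \<le> p"
      then have "\<sigma> b \<in> fibre_family p" using b unfolding fibre_family_def by blast
      then have "x \<in> \<sigma> b" using x(2) by blast
      then show False using b mem_sigma by blast
    qed
  qed
  show "p \<le> f x" unfolding le_iff_compacts_le[of p]
  proof (intro allI impI)
    fix c assume c: "lat_compact c \<and> c \<le> p"
    then have "topspace X - \<sigma> c \<in> fibre_family p" unfolding fibre_family_def by blast
    then have "x \<notin> \<sigma> c" using x(2) by blast
    then show "c \<le> f x" using c x(1) mem_sigma by blast
  qed
qed

lemma sigma_not_below_prime_directed: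
  assumes p: "lat_prime m p"
    and ST: "S \<in> \<sigma> ` {b. lat_compact b \<and> \<not> b \<le> p}" "T \<in> \<sigma> ` {b. lat_compact b \<and> \<not> b \<le> p}"
  shows "\<exists>R\<in>\<sigma> ` {b. lat_compact b \<and> \<not> b \<le> p}. R \<subseteq> S \<and> R \<subseteq> T"
proof -
  obtain b b' where b: "lat_compact b" "\<not> b \<le> p" "S = \<sigma> b"
    and b': "lat_compact b'" "\<not> b' \<le> p" "T = \<sigma> b'" using ST by blast
  then have "\<sigma> (m b b') \<in> \<sigma> ` {b. lat_compact b \<and> \<not> b \<le> p}"
    using lat_compact_mult prime_mult_le_iff[OF p] by blast
  then show ?thesis using b b' sigma_mult by (intro bexI[of _ "\<sigma> (m b b')"]) simp_all
qed

lemma Diff_sigma_below_directed: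
  assumes ST: "S \<in> (\<lambda>c. topspace X - \<sigma> c) ` {c. lat_compact c \<and> c \<le> p}"
    "T \<in> (\<lambda>c. topspace X - \<sigma> c) ` {c. lat_compact c \<and> c \<le> p}"
  shows "\<exists>R\<in>(\<lambda>c. topspace X - \<sigma> c) ` {c. lat_compact c \<and> c \<le> p}. R \<subseteq> S \<and> R \<subseteq> T"
proof -
  obtain c c' where c: "lat_compact c" "c \<le> p" "S = topspace X - \<sigma> c"
    and c': "lat_compact c'" "c' \<le> p" "T = topspace X - \<sigma> c'" using ST by blast
  then have "sup c c' \<in> {c. lat_compact c \<and> c \<le> p}" using lat_compact_sup by simp
  then have "topspace X - \<sigma> (sup c c') \<in> (\<lambda>c. topspace X - \<sigma> c) ` {c. lat_compact c \<and> c \<le> p}"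
    by (rule imageI)
  moreover have "topspace X - \<sigma> (sup c c') = S \<inter> T" using c c' sigma_sup by auto
  ultimately show ?thesis by blast
qed

lemma classifying_imp_fip_fibre_family:
  assumes cl: "classifying m X \<sigma>" and p: "lat_prime m p"
  shows "fip_in X (fibre_family p)"
  unfolding fip_in_def
proof (intro allI impI)
  define \<A> where "\<A> = \<sigma> ` {b. lat_compact b \<and> \<not> b \<le> p}"
  define \<U> where "\<U> = (\<lambda>c. topspace X - \<sigma> c) ` {c. lat_compact c \<and> c \<le> p}"
  note \<A>_directed = sigma_not_below_prime_directed[OF p, folded \<A>_def]
  note \<U>_directed = Diff_sigma_below_directed[of _ p, folded \<U>_def]
  have "top \<in> {b. lat_compact b \<and> \<not> b \<le> p}" using lat_compact_top prime_not_top_le[OF p] by simp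
  then have "\<A> \<noteq> {}" unfolding \<A>_def by blast
  have "bot \<in> {c. lat_compact c \<and> c \<le> p}" using lat_compact_bot by simp
  then have "\<U> \<noteq> {}" unfolding \<U>_def by blast
  fix \<G> assume \<G>: "finite \<G> \<and> \<G> \<subseteq> fibre_family p"
  obtain B where "B \<in> \<A>" and B: "\<forall>S\<in>\<G> \<inter> \<A>. B \<subseteq> S"
    using finite_subset_directed_bound[of "\<G> \<inter> \<A>" \<A> "\<lambda>S R. R \<subseteq> S"] \<G> \<A>_directed \<open>\<A> \<noteq> {}\<close>
    by blast
  then obtain b where b: "lat_compact b" "\<not> b \<le> p" "B = \<sigma> b" unfolding \<A>_def by blast
  obtain U where "U \<in> \<U>" and U: "\<forall>S\<in>\<G> \<inter> \<U>. U \<subseteq> S"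
    using finite_subset_directed_bound[of "\<G> \<inter> \<U>" \<U> "\<lambda>S R. R \<subseteq> S"] \<G> \<U>_directed \<open>\<U> \<noteq> {}\<close>
    by blast
  then obtain c where c: "lat_compact c" "c \<le> p" "U = topspace X - \<sigma> c" unfolding \<U>_def by blast
  have "\<not> \<sigma> b \<subseteq> \<sigma> c"
  proof
    assume "\<sigma> b \<subseteq> \<sigma> c"
    then have "b \<le> sd_psi \<sigma> (\<sigma> c)" using le_sd_psi_iff sd_phi_compact[OF b(1)] by simp
    also have "\<dots> = lat_radical m c" using classifying_imp_sd_psi_sigma[OF cl c(1)] .
    also have "\<dots> \<le> p" using lat_radical_le_prime[OF p c(2)] .
    finally show False using b(2) by simp
  qed
  then obtain x where "x \<in> B" "x \<in> U" using b(3) c(3) sigma_subset[OF b(1)] by blast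
  moreover have "\<G> \<subseteq> \<A> \<union> \<U>" using \<G> unfolding fibre_family_def \<A>_def \<U>_def by blast
  ultimately have "x \<in> topspace X \<inter> \<Inter>\<G>" using B U c(3) by blast
  then show "topspace X \<inter> \<Inter>\<G> \<noteq> {}" by blast
qed

lemma classifying_imp_surjective:
  assumes cl: "classifying m X \<sigma>"
  shows "f ` topspace X = primes m"
proof
  show "f ` topspace X \<subseteq> primes m" using prime_image unfolding primes_def by blast
  show "primes m \<subseteq> f ` topspace X"
  proof
    fix p assume "p \<in> primes m"
    then have "fip_in X (fibre_family p)"
      using classifying_imp_fip_fibre_family[OF cl] unfolding primes_def by blast
    moreover have "\<forall>S\<in>fibre_family p. closedin X S \<or> qc_open X S"
      unfolding fibre_family_def
      using closedin_sigma classifying_imp_qc_open_Diff_sigma[OF cl] by blast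
    moreover have "spectral_space X" using cl unfolding classifying_def by blast
    ultimately obtain x where "x \<in> topspace X" "x \<in> \<Inter>(fibre_family p)"
      using spectral_patch_fip by blast
    then show "p \<in> f ` topspace X" using fibre_family_point by blast
  qed
qed

lemma inj_if_Diff_sigma_basis:
  assumes "t0_space X"
    and basis: "\<And>U x. openin X U \<Longrightarrow> x \<in> U
                 \<Longrightarrow> \<exists>c. lat_compact c \<and> x \<in> topspace X - \<sigma> c \<and> topspace X - \<sigma> c \<subseteq> U"
  shows "inj_on f (topspace X)"
proof (rule inj_onI, rule ccontr)
  have separate: "f u \<noteq> f v" if Uuv: "openin X U" "u \<in> U" "v \<in> topspace X - U" for U u v
  proof -
    obtain c where c: "lat_compact c" "u \<in> topspace X - \<sigma> c" "topspace X - \<sigma> c \<subseteq> U"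
      using basis[OF Uuv(1,2)] by blast
    then have "v \<in> \<sigma> c" using Uuv(3) by blast
    then have "c \<le> f u" "\<not> c \<le> f v" using c(1,2) mem_sigma by blast+
    then show ?thesis by auto
  qed
  fix x y assume xy: "x \<in> topspace X" "y \<in> topspace X" "f x = f y" "x \<noteq> y"
  then obtain U where "openin X U" "x \<notin> U \<longleftrightarrow> y \<in> U"
    using \<open>t0_space X\<close> unfolding t0_space_def by blast
  then show False using separate[of U x y] separate[of U y x] xy by (cases "x \<in> U") auto
qed

lemma homeomorphic_if_qc_opens_Diff_sigma:
  assumes X: "spectral_space X"
    and qc: "\<And>W. qc_open X W \<Longrightarrow> \<exists>c. lat_compact c \<and> W = topspace X - \<sigma> c"
    and onto: "f ` topspace X = primes m"
  shows "homeomorphic_map X (spec_star m) f"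
proof -
  have X_basis: "\<And>U x. openin X U \<Longrightarrow> x \<in> U \<Longrightarrow> \<exists>W. qc_open X W \<and> x \<in> W \<and> W \<subseteq> U"
    using X unfolding spectral_space_def by blast
  have basis: "\<exists>c. lat_compact c \<and> x \<in> topspace X - \<sigma> c \<and> topspace X - \<sigma> c \<subseteq> U"
    if Ux: "openin X U" "x \<in> U" for U x
  proof -
    obtain W where "qc_open X W" "x \<in> W" "W \<subseteq> U" using X_basis[OF Ux] by blast
    moreover from this obtain c where "lat_compact c" "W = topspace X - \<sigma> c" using qc by blast
    ultimately show ?thesis by blast
  qed
  have "t0_space X" using X unfolding spectral_space_def by blast
  note inj = inj_if_Diff_sigma_basis[OF this basis]
  have open_f: "open_map X (spec_star m) f" unfolding open_map_def openin_spec_star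
  proof (intro allI impI ballI)
    fix U q assume "openin X U" "q \<in> f ` U"
    then obtain x where "x \<in> U" "q = f x" by blast
    then obtain c where "lat_compact c" "x \<in> topspace X - \<sigma> c" "topspace X - \<sigma> c \<subseteq> U"
      using basis \<open>openin X U\<close> by blast
    moreover from this have "f ` (topspace X - \<sigma> c) = zarV m c" by (simp add: image_Diff_sigma onto)
    ultimately show "\<exists>c. lat_compact c \<and> q \<in> zarV m c \<and> zarV m c \<subseteq> f ` U"
      using \<open>q = f x\<close> by blast
  qed
  show ?thesis
    using bijective_open_imp_homeomorphic_map[OF continuous open_f _ inj] onto
    by (simp add: topspace_spec_star)
qed

lemma homeomorphic_imp_qc_open_iff:
  assumes h: "homeomorphic_map X (spec_star m) f"
  shows "qc_open X W \<longleftrightarrow> (\<exists>c. lat_compact c \<and> W = topspace X - \<sigma> c)"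
proof -
  have onto: "f ` topspace X = primes m" and inj: "inj_on f (topspace X)"
    using h by (simp_all add: homeomorphic_imp_surjective_map homeomorphic_imp_injective_map
        flip: topspace_spec_star)
  have "qc_open X W \<longleftrightarrow> W \<subseteq> topspace X \<and> (\<exists>c. lat_compact c \<and> f ` W = zarV m c)"
    using qc_open_homeomorphic_map_eq[OF h] qc_open_spec_star by blast
  also have "\<dots> \<longleftrightarrow> (\<exists>c. lat_compact c \<and> W = topspace X - \<sigma> c)"
  proof
    assume "W \<subseteq> topspace X \<and> (\<exists>c. lat_compact c \<and> f ` W = zarV m c)"
    then obtain c where "W \<subseteq> topspace X" "lat_compact c" "f ` W = f ` (topspace X - \<sigma> c)"
      using image_Diff_sigma[OF onto] by metis
    then show "\<exists>c. lat_compact c \<and> W = topspace X - \<sigma> c"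
      using inj_on_image_eq_iff[OF inj] by blast
  qed (auto simp: image_Diff_sigma[OF onto])
  finally show ?thesis .
qed

lemma sd_psi_sd_phi_semiprime:
  assumes onto: "f ` topspace X = primes m" and a: "lat_semiprime m a"
  shows "sd_psi \<sigma> (sd_phi \<sigma> a) = a"
proof (rule antisym)
  show "a \<le> sd_psi \<sigma> (sd_phi \<sigma> a)" by (simp add: le_sd_psi_iff)
  show "sd_psi \<sigma> (sd_phi \<sigma> a) \<le> a" unfolding le_iff_compacts_le[of "sd_psi \<sigma> (sd_phi \<sigma> a)"]
  proof (intro allI impI)
    fix b assume b: "lat_compact b \<and> b \<le> sd_psi \<sigma> (sd_phi \<sigma> a)"
    show "b \<le> a"
    proof (rule ccontr)
      assume "\<not> b \<le> a"
      then obtain p where p: "lat_prime m p" "a \<le> p" "\<not> b \<le> p"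
        using semiprime_exists_prime[OF a] b by blast
      then have "p \<in> f ` topspace X" using onto unfolding primes_def by simp
      then obtain x where x: "x \<in> topspace X" "f x = p" by blast
      then have "x \<in> sd_phi \<sigma> b" "x \<notin> sd_phi \<sigma> a" using p(2,3) by (simp_all add: sd_phi_eq)
      moreover have "sd_phi \<sigma> b \<subseteq> sd_phi \<sigma> a" using b le_sd_psi_iff[of b] by blast
      ultimately show False by blast
    qed
  qed
qed

lemma classifying_if_qc_opens_Diff_sigma:
  assumes X: "spectral_space X"
    and qc: "\<And>W. qc_open X W \<longleftrightarrow> (\<exists>c. lat_compact c \<and> W = topspace X - \<sigma> c)"
    and onto: "f ` topspace X = primes m"
  shows "classifying m X \<sigma>"
  unfolding classifying_def
proof (intro conjI allI impI X)
  fix a assume "lat_semiprime m a"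
  then show "sd_psi \<sigma> (sd_phi \<sigma> a) = a" by (rule sd_psi_sd_phi_semiprime[OF onto])
  show "thomason_subset X (sd_phi \<sigma> a)"
    unfolding thomason_subset_def sd_phi_def
    using sigma_subset qc by (intro exI[of _ "{\<sigma> b | b. lat_compact b \<and> b \<le> a}"]) auto
next
  fix Y assume "thomason_subset X Y"
  then obtain \<F> where \<F>: "\<forall>Z\<in>\<F>. Z \<subseteq> topspace X \<and> qc_open X (topspace X - Z)" "Y = \<Union>\<F>"
    unfolding thomason_subset_def by blast
  show "lat_semiprime m (sd_psi \<sigma> Y)" by (rule semiprime_sd_psi)
  have "Z \<subseteq> sd_phi \<sigma> (sd_psi \<sigma> Y)" if Z: "Z \<in> \<F>" for Z
  proof -
    have "qc_open X (topspace X - Z)" using \<F>(1) Z by blast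
    then obtain c where c: "lat_compact c" "topspace X - Z = topspace X - \<sigma> c"
      unfolding qc by blast
    then have "Z = \<sigma> c" using \<F>(1) Z sigma_subset[OF c(1)] by blast
    then have "\<sigma> c \<subseteq> Y" using \<F>(2) Z by blast
    then have "c \<le> sd_psi \<sigma> Y" using le_sd_psi_iff[of c Y] sd_phi_compact[OF c(1)] by simp
    then show ?thesis using \<open>Z = \<sigma> c\<close> sd_phi_mono sd_phi_compact[OF c(1)] by metis
  qed
  then show "sd_phi \<sigma> (sd_psi \<sigma> Y) = Y" using sd_phi_sd_psi_subset \<F>(2) by blast
qed

end

theorem mainTheorem11:
  fixes m :: "'a::complete_lattice \<Rightarrow> 'a \<Rightarrow> 'a"
    and X :: "'b topology" and \<sigma> :: "'a \<Rightarrow> 'b set" and f :: "'b \<Rightarrow> 'a"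
  assumes "ideal_lattice m"
    and "support_datum m X \<sigma>"
    and "continuous_map X (spec_star m) f"
    and "\<And>a. lat_compact a \<Longrightarrow> \<sigma> a = {x \<in> topspace X. f x \<in> supp m a}"
  shows "classifying m X \<sigma> \<longleftrightarrow> homeomorphic_map X (spec_star m) f"
proof -
  interpret canonical_morphism m X \<sigma> f
    by unfold_locales (use assms(1,3,4) in auto)
  show ?thesis
  proof
    assume cl: "classifying m X \<sigma>"
    show "homeomorphic_map X (spec_star m) f"
    proof (rule homeomorphic_if_qc_opens_Diff_sigma)
      show "spectral_space X" using cl unfolding classifying_def by blast
      show "\<exists>c. lat_compact c \<and> W = topspace X - \<sigma> c" if "qc_open X W" for W
        using classifying_imp_qc_open_eq_Diff_sigma[OF cl that] by blast
      show "f ` topspace X = primes m" using classifying_imp_surjective[OF cl] .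
    qed
  next
    assume h: "homeomorphic_map X (spec_star m) f"
    show "classifying m X \<sigma>"
    proof (rule classifying_if_qc_opens_Diff_sigma)
      show "spectral_space X" using spectral_space_homeomorphic_map[OF h spectral_space_spec_star] .
      show "qc_open X W \<longleftrightarrow> (\<exists>c. lat_compact c \<and> W = topspace X - \<sigma> c)" for W
        using homeomorphic_imp_qc_open_iff[OF h] .
      show "f ` topspace X = primes m"
        using homeomorphic_imp_surjective_map[OF h] by (simp add: topspace_spec_star)
    qed
  qed
qed

end
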